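(* Let $\hat H_n=2^{-n}H_n$ be the monic Hermite polynomials, and let $(\rho_n)_{n\ge0}$ be positive real numbers such that, for some $0\le\nu\le1/4$, $$\frac{2\rho_{n-1}}{\rho_n}\le n^\nu,\quad n\ge1.$$ Let $K$ be a positive integer and $\gamma_0,\dots,\gamma_K$ real numbers with $\gamma_0=1$, $\gamma_K\neq0$. Then the polynomial $$q_n(x)=\sum_{j=0}^K\gamma_j\rho_{n-j}\hat H_{n-j}(x)$$ has only real zeros for $$n\ge\max\left\{6^{2\nu}\left(\frac{6^{\nu(K-1)}-1}{6^\nu-1}\right)^24^{K-2}\max{}^2\{|\gamma_j|:2\le j\le K\},\ 2K\right\}.$$ Moreover, the zeros are simple and interlace the zeros of $H_{n-1}$.
   Context: $H_n$ denotes the Hermite polynomial of degree $n$ (orthogonal with respect to $e^{-x^2}dx$ on $\mathbb{R}$, leading coefficient $2^n$); the monic ones satisfy $x\hat H_n=\hat H_{n+1}+\frac n2\hat H_{n-1}$. When $\nu=0$ the quotient $\frac{6^{\nu(K-1)}-1}{6^\nu-1}$ is to be read as $\sum_{j=0}^{K-2}6^{\nu j}=K-1$. Interlacing: given two finite sets $U,V$ of reals, $U$ interlaces $V$ if $\min U<\min V$ and between any two consecutive elements of either set there is an element of the other; here $U$ is the zero set of $q_n$ and $V$ that of $H_{n-1}$. *)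

theory Defs
  imports "HOL-Computational_Algebra.Polynomial" Complex_Main
begin

fun monic_hermite :: "nat \<Rightarrow> real poly" where
  "monic_hermite 0 = 1"
| "monic_hermite (Suc 0) = [:0, 1:]"
| "monic_hermite (Suc (Suc n)) =
     [:0, 1:] * monic_hermite (Suc n) - smult ((real n + 1) / 2) (monic_hermite n)"

definition hermite :: "nat \<Rightarrow> real poly" where
  "hermite n = smult (2 ^ n) (monic_hermite n)"

definition interlaces :: "real set \<Rightarrow> real set \<Rightarrow> bool" where
  "interlaces U V \<longleftrightarrow>
     finite U \<and> finite V \<and> U \<noteq> {} \<and> V \<noteq> {} \<and> Min U < Min V \<and>
     (\<forall>a\<in>U. \<forall>b\<in>U. a < b \<and> (\<forall>c\<in>U. \<not> (a < c \<and> c < b)) \<longrightarrow> (\<exists>v\<in>V. a < v \<and> v < b)) \<and>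
     (\<forall>a\<in>V. \<forall>b\<in>V. a < b \<and> (\<forall>c\<in>V. \<not> (a < c \<and> c < b)) \<longrightarrow> (\<exists>u\<in>U. a < u \<and> u < b))"

text \<open>The quotient (6^(nu(K-1)) - 1)/(6^nu - 1), read as K-1 when nu = 0.\<close>
definition geom_quot :: "real \<Rightarrow> nat \<Rightarrow> real" where
  "geom_quot \<nu> K = (if \<nu> = 0 then real K - 1
                     else (6 powr (\<nu> * (real K - 1)) - 1) / (6 powr \<nu> - 1))"

definition q_poly :: "(nat \<Rightarrow> real) \<Rightarrow> (nat \<Rightarrow> real) \<Rightarrow> nat \<Rightarrow> nat \<Rightarrow> real poly" where
  "q_poly \<gamma> \<rho> K n = (\<Sum>j\<le>K. smult (\<gamma> j * \<rho> (n - j)) (monic_hermite (n - j)))"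

end

theory Submission
  imports Defs
begin

text \<open>
  Write H_k for the monic Hermite polynomials and let x_0 < ... < x_(n-2) be the zeros of H_(n-1).
  Since H_n(x_i) = -(n-1)/2 H_(n-2)(x_i) and the
  zeros of consecutive Hermite polynomials interlace, the leading part rho_n H_n of q_n alternates in
  sign along the x_i. Running the three-term recurrence backwards from a zero of H_(n-1) gives
  |H_(n-j)(x_i)| <= (8 / sqrt n)^(j-2) |H_(n-2)(x_i)|, and the ratio condition gives
  rho_(n-j) <= rho_n (n^nu / 2)^j; the lower bound on n makes the terms j >= 2 of q_n(x_i) together
  smaller than rho_n (n-1)/2 |H_(n-2)(x_i)|, so q_n alternates in sign along the x_i as well.
  Together with its signs at plus and minus infinity, q_n then changes sign in each of the n
  intervals cut out by the x_i, which yields n simple real zeros interlacing those of H_(n-1).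
  The same sign argument, by induction on the degree, gives the interlacing of consecutive
  Hermite polynomials.
\<close>

section \<open>Polynomials with prescribed simple roots\<close>

lemma prod_linear_factors_dvd:
  fixes p :: "'a::idom poly" and N :: nat
  assumes "inj_on w {..<N}" "\<And>i. i < N \<Longrightarrow> poly p (w i) = 0"
  shows "(\<Prod>i<N. [:- w i, 1:]) dvd p"
  using assms
proof (induction N)
  case (Suc N)
  then obtain r where r: "p = (\<Prod>i<N. [:- w i, 1:]) * r"
    by (auto simp: inj_on_def elim!: dvdE)
  have "w N \<noteq> w i" if "i < N" for i
    using Suc.prems(1) that by (auto dest: inj_onD)
  then have "(\<Prod>i<N. w N - w i) \<noteq> 0"
    by simp
  moreover have "(\<Prod>i<N. w N - w i) * poly r (w N) = 0"
    using Suc.prems(2)[of N] by (simp add: r poly_prod)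
  ultimately have "[:- w N, 1:] dvd r"
    by (simp add: poly_eq_0_iff_dvd)
  then show ?case
    unfolding r prod.lessThan_Suc by (rule mult_dvd_mono[OF dvd_refl])
qed simp

lemma poly_eq_smult_prod_roots:
  fixes p :: "'a::idom poly" and N :: nat
  assumes "degree p = N" "inj_on w {..<N}" "\<And>i. i < N \<Longrightarrow> poly p (w i) = 0"
  shows "p = smult (lead_coeff p) (\<Prod>i<N. [:- w i, 1:])"
proof (cases "p = 0")
  case False
  obtain r where r: "p = (\<Prod>i<N. [:- w i, 1:]) * r"
    using prod_linear_factors_dvd[OF assms(2,3)] by blast
  have "degree (\<Prod>i<N. [:- w i, 1:]) = N"
    by (simp add: degree_prod_eq_sum_degree)
  then have "degree r = 0"
    using False assms(1) by (simp add: r degree_mult_eq)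
  then obtain c where "r = [:c:]"
    by (rule degree_eq_zeroE)
  then show ?thesis
    by (simp add: r lead_coeff_mult lead_coeff_prod)
qed simp

lemma poly_smult_prod_roots_eq_0_iff:
  fixes w :: "nat \<Rightarrow> 'a::idom" and N :: nat
  assumes "c \<noteq> 0"
  shows "poly (smult c (\<Prod>i<N. [:- w i, 1:])) z = 0 \<longleftrightarrow> z \<in> w ` {..<N}"
  using assms by (auto simp: poly_prod)

lemma poly_prod_roots_at_root:
  fixes w :: "nat \<Rightarrow> 'a::idom"
  assumes "i < N"
  shows "poly (\<Prod>k<N. [:- w k, 1:]) (w i) = 0"
  using assms by (auto simp: poly_prod)

lemma pderiv_smult_prod_roots_nonzero:
  fixes w :: "nat \<Rightarrow> 'a::idom" and N :: nat
  assumes "c \<noteq> 0" "inj_on w {..<N}" "i < N"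
  shows "poly (pderiv (smult c (\<Prod>k<N. [:- w k, 1:]))) (w i) \<noteq> 0"
proof -
  define R where "R = (\<Prod>k\<in>{..<N} - {i}. [:- w k, 1:])"
  have "(\<Prod>k<N. [:- w k, 1:]) = [:- w i, 1:] * R"
    unfolding R_def using assms(3) by (subst prod.remove[of _ i]) auto
  then have "poly (pderiv (\<Prod>k<N. [:- w k, 1:])) (w i) = poly R (w i)"
    by (simp add: pderiv_mult pderiv_pCons del: mult_pCons_left)
  moreover have "poly R (w i) \<noteq> 0"
    using assms(2,3) by (auto simp: R_def poly_prod inj_on_def)
  ultimately show ?thesis
    using assms(1) by (simp add: pderiv_smult)
qed

lemma poly_map_poly_of_real:
  "poly (map_poly of_real p) (of_real x :: 'a::{real_algebra_1,comm_ring_1}) = of_real (poly p x)"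
  by (induction p) (auto simp: map_poly_pCons)

lemma of_real_poly_roots_real_and_simple:
  fixes q :: "real poly" and zs :: "nat \<Rightarrow> real"
  assumes "q \<noteq> 0" "degree q = N" "inj_on zs {..<N}" "\<And>i. i < N \<Longrightarrow> poly q (zs i) = 0"
  defines "P \<equiv> map_poly complex_of_real q"
  shows "(\<forall>z. poly P z = 0 \<longrightarrow> z \<in> \<real>)
    \<and> (\<forall>z. poly P z = 0 \<longrightarrow> poly (pderiv P) z \<noteq> 0)"
proof -
  define w where "w i = complex_of_real (zs i)" for i
  have "inj_on w {..<N}"
    using assms(3) by (auto simp: w_def inj_on_def)
  moreover have "degree P = N"
    using assms(2) by (simp add: P_def degree_map_poly)
  moreover have "lead_coeff P \<noteq> 0"
    using assms(1) by (simp add: P_def lead_coeff_map_poly_nz)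
  moreover have "poly P (w i) = 0" if "i < N" for i
    using assms(4)[OF that] by (simp add: P_def w_def poly_map_poly_of_real)
  ultimately have P: "P = smult (lead_coeff P) (\<Prod>i<N. [:- w i, 1:])"
    and roots: "poly P z = 0 \<longleftrightarrow> z \<in> w ` {..<N}" for z
    using poly_eq_smult_prod_roots[of P N w] poly_smult_prod_roots_eq_0_iff[of "lead_coeff P" w N]
    by metis+
  show ?thesis
  proof (intro conjI allI impI)
    fix z assume "poly P z = 0"
    then obtain i where "i < N" "z = w i"
      using roots by blast
    then show "z \<in> \<real>"
      by (simp add: w_def)
    show "poly (pderiv P) z \<noteq> 0"
      using pderiv_smult_prod_roots_nonzero[OF \<open>lead_coeff P \<noteq> 0\<close> \<open>inj_on w {..<N}\<close> \<open>i < N\<close>]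
      by (subst P) (simp add: \<open>z = w i\<close>)
  qed
qed

section \<open>Interlacing zeros from alternating signs\<close>

lemma strict_mono_on_lessThan_SucI:
  fixes f :: "nat \<Rightarrow> 'a::order"
  assumes "\<And>i. Suc i < N \<Longrightarrow> f i < f (Suc i)"
  shows "strict_mono_on {..<N} f"
proof (rule strict_mono_onI)
  fix i j :: nat assume "i \<in> {..<N}" "j \<in> {..<N}" "i < j"
  then show "f i < f j"
  proof (induction j)
    case (Suc j)
    then show ?case
      using assms by (cases "i = j") (auto intro: less_trans)
  qed simp
qed

lemma consecutive_values_strict_mono:
  fixes f :: "nat \<Rightarrow> 'a::linorder"
  assumes mono: "strict_mono_on {..<N} f" and "a \<in> f ` {..<N}" "b \<in> f ` {..<N}" "a < b"
    and between: "\<forall>c\<in>f ` {..<N}. \<not> (a < c \<and> c < b)"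
  obtains i where "Suc i < N" "a = f i" "b = f (Suc i)"
proof -
  obtain i j where ij: "i < N" "j < N" "a = f i" "b = f j"
    using assms(2,3) by auto
  then have "i < j"
    using strict_mono_on_less[OF mono] \<open>a < b\<close> by auto
  have "j = Suc i"
  proof (rule ccontr)
    assume "j \<noteq> Suc i"
    then have "f i < f (Suc i)" "f (Suc i) < f j"
      using \<open>i < j\<close> ij strict_mono_onD[OF mono] by auto
    then show False
      using between ij \<open>i < j\<close> by auto
  qed
  with ij that show ?thesis
    by blast
qed

lemma interlaces_image:
  fixes zs xs :: "nat \<Rightarrow> real"
  assumes zs_mono: "strict_mono_on {..<Suc M} zs"
    and interlacing: "\<And>i. i < M \<Longrightarrow> zs i < xs i \<and> xs i < zs (Suc i)" and "0 < M"
  shows "interlaces (zs ` {..<Suc M}) (xs ` {..<M})"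
proof -
  have xs_mono: "strict_mono_on {..<M} xs"
    using interlacing by (intro strict_mono_on_lessThan_SucI) (meson Suc_lessD less_trans)
  have "Min (f ` {..<N}) = f 0" if "strict_mono_on {..<N} f" "0 < N" for f :: "nat \<Rightarrow> real" and N
    using that by (intro Min_eqI) (auto simp: strict_mono_on_less_eq)
  then have "Min (zs ` {..<Suc M}) = zs 0" "Min (xs ` {..<M}) = xs 0"
    using zs_mono xs_mono \<open>0 < M\<close> by auto
  moreover have "\<exists>v\<in>xs ` {..<M}. a < v \<and> v < b"
    if "a \<in> zs ` {..<Suc M}" "b \<in> zs ` {..<Suc M}" "a < b"
      "\<forall>c\<in>zs ` {..<Suc M}. \<not> (a < c \<and> c < b)" for a b
    using consecutive_values_strict_mono[OF zs_mono that] interlacing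
    by (metis Suc_less_SucD image_eqI lessThan_iff)
  moreover have "\<exists>u\<in>zs ` {..<Suc M}. a < u \<and> u < b"
    if "a \<in> xs ` {..<M}" "b \<in> xs ` {..<M}" "a < b"
      "\<forall>c\<in>xs ` {..<M}. \<not> (a < c \<and> c < b)" for a b
    using consecutive_values_strict_mono[OF xs_mono that] interlacing
    by (metis Suc_lessD Suc_mono image_eqI lessThan_iff)
  ultimately show ?thesis
    using interlacing[of 0] \<open>0 < M\<close> by (auto simp: interlaces_def)
qed

lemma neg_one_power_Suc_pos_of_mult_neg:
  fixes a b :: "'a::linordered_idom"
  assumes "a * b < 0" "(-1) ^ k * b > 0"
  shows "(-1) ^ Suc k * a > 0"
proof -
  have "((-1) ^ k * a) * ((-1) ^ k * b) = a * b"
    by (simp add: algebra_simps flip: power_add)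
  then have "(-1) ^ k * a < 0"
    using assms by (metis mult_nonneg_nonneg not_le order.strict_implies_order)
  then show ?thesis
    by simp
qed

lemma poly_signs_at_infinity:
  fixes p :: "real poly"
  assumes "lead_coeff p > 0"
  obtains B where "\<And>x. x \<ge> B \<Longrightarrow> poly p x > 0"
    and "\<And>x. x \<le> - B \<Longrightarrow> (-1) ^ degree p * poly p x > 0"
proof -
  define p' where "p' = smult ((-1) ^ degree p) (pcompose p [:0, -1:])"
  have "lead_coeff p' = lead_coeff p"
    by (simp add: p'_def lead_coeff_comp flip: power_mult_distrib)
  then obtain B' where B': "\<And>x. x \<ge> B' \<Longrightarrow> poly p' x \<ge> lead_coeff p"
    using poly_pinfty_gt_lc[of p'] assms by auto
  obtain B where B: "\<And>x. x \<ge> B \<Longrightarrow> poly p x \<ge> lead_coeff p"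
    using poly_pinfty_gt_lc[OF assms] by auto
  show ?thesis
  proof
    show "poly p x > 0" if "x \<ge> max B B'" for x
      using B[of x] assms that by simp
    show "(-1) ^ degree p * poly p x > 0" if "x \<le> - max B B'" for x
    proof -
      have "B' \<le> - x"
        using that by linarith
      then show ?thesis
        using B'[of "- x"] assms by (simp add: p'_def poly_pcompose)
    qed
  qed
qed

lemma sign_prod_diff:
  fixes x :: real and w :: "nat \<Rightarrow> real"
  assumes "i \<le> M" "\<And>k. k < i \<Longrightarrow> w k < x" "\<And>k. i \<le> k \<Longrightarrow> k < M \<Longrightarrow> x < w k"
  shows "(-1) ^ (M - i) * (\<Prod>k<M. x - w k) > 0"
  using assms(1)
proof (induction M rule: dec_induct)
  case base
  then show ?case
    using assms(2) by (auto intro: prod_pos)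
next
  case (step m)
  have "(-1) ^ (Suc m - i) = - ((-1) ^ (m - i) :: real)"
    using step.hyps by (simp add: Suc_diff_le)
  then have "(-1) ^ (Suc m - i) * (\<Prod>k<Suc m. x - w k)
      = ((-1) ^ (m - i) * (\<Prod>k<m. x - w k)) * (w m - x)"
    by (simp add: algebra_simps)
  moreover have "w m - x > 0"
    using assms(3)[of m] step.hyps by simp
  ultimately show ?case
    using step.IH by (metis mult_pos_pos)
qed

lemma interlacing_sign_prod:
  fixes zs xs :: "nat \<Rightarrow> real"
  assumes "strict_mono_on {..<Suc M} zs" "\<And>k. k < M \<Longrightarrow> zs k < xs k \<and> xs k < zs (Suc k)" "i \<le> M"
  shows "(-1) ^ (M - i) * (\<Prod>k<M. zs i - xs k) > 0"
proof (rule sign_prod_diff[OF assms(3)])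
  fix k
  show "xs k < zs i" if "k < i"
  proof -
    have "zs (Suc k) \<le> zs i"
      using strict_mono_on_less_eq[OF assms(1), of "Suc k" i] that assms(3) by simp
    then show ?thesis
      using assms(2)[of k] that assms(3) by simp
  qed
  show "zs i < xs k" if "i \<le> k" "k < M"
  proof -
    have "zs i \<le> zs k"
      using strict_mono_on_less_eq[OF assms(1), of i k] that by simp
    then show ?thesis
      using assms(2)[of k] that by simp
  qed
qed

lemma poly_roots_between_sign_changes:
  fixes p :: "real poly" and t :: "nat \<Rightarrow> real"
  assumes "\<And>j. j \<le> N \<Longrightarrow> t j < t (Suc j)"
    and "\<And>j. j \<le> N \<Longrightarrow> poly p (t j) * poly p (t (Suc j)) < 0"
  obtains zs where "\<And>j. j \<le> N \<Longrightarrow> t j < zs j \<and> zs j < t (Suc j) \<and> poly p (zs j) = 0"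
proof -
  have "\<exists>z. t j < z \<and> z < t (Suc j) \<and> poly p z = 0" if "j \<le> N" for j
    using poly_IVT assms that by blast
  then show ?thesis
    using that by metis
qed

lemma alternating_signs_imp_interlacing_roots:
  fixes p :: "real poly" and xs :: "nat \<Rightarrow> real"
  assumes deg: "degree p = Suc M" and lead: "lead_coeff p > 0"
    and mono: "strict_mono_on {..<M} xs"
    and signs: "\<And>i. i < M \<Longrightarrow> (-1) ^ (M - i) * poly p (xs i) > 0"
  obtains zs where "\<And>i. i < M \<Longrightarrow> zs i < xs i \<and> xs i < zs (Suc i)"
    and "strict_mono_on {..<Suc M} zs"
    and "p = smult (lead_coeff p) (\<Prod>i<Suc M. [:- zs i, 1:])"
proof -
  obtain B where B: "\<And>x. x \<ge> B \<Longrightarrow> poly p x > 0"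
      "\<And>x. x \<le> - B \<Longrightarrow> (-1) ^ Suc M * poly p x > 0"
    using poly_signs_at_infinity[OF lead] deg by metis
  define R where "R = \<bar>B\<bar> + 1 + (\<Sum>i<M. \<bar>xs i\<bar>)"
  have xs_R: "- R < xs i \<and> xs i < R" if "i < M" for i
  proof -
    have "\<bar>xs i\<bar> \<le> (\<Sum>i<M. \<bar>xs i\<bar>)"
      using that by (intro member_le_sum) auto
    then show ?thesis
      unfolding R_def by linarith
  qed
  have B_R: "B \<le> R"
    unfolding R_def by (simp add: sum_nonneg add_increasing2)
  define t where "t j = (if j = 0 then - R else if j \<le> M then xs (j - 1) else R)" for j
  have t_signs: "(-1) ^ (Suc M - j) * poly p (t j) > 0" if "j \<le> Suc M" for j
    using that B[of R] B[of "- R"] B_R signs[of "j - 1"]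
    by (cases "j = 0"; cases "j = Suc M") (auto simp: t_def Suc_diff_le)
  have t_mono: "t j < t (Suc j)" if "j \<le> M" for j
    using that xs_R[of 0] xs_R[of "j - 1"] strict_mono_onD[OF mono, of "j - 1" j] R_def
    by (cases "j = 0"; cases "j = M") (auto simp: t_def)
  have "poly p (t j) * poly p (t (Suc j)) < 0" if "j \<le> M" for j
  proof -
    have "(-1) ^ (2 * (M - j) + 1) * (poly p (t j) * poly p (t (Suc j))) > 0"
      using mult_pos_pos[OF t_signs[of j] t_signs[of "Suc j"]] that
      by (simp add: Suc_diff_le power_add mult_ac)
    then show ?thesis
      by (simp add: power_add)
  qed
  with t_mono obtain zs
    where zs: "\<And>j. j \<le> M \<Longrightarrow> t j < zs j \<and> zs j < t (Suc j) \<and> poly p (zs j) = 0"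
    using poly_roots_between_sign_changes by blast
  have interlacing: "zs i < xs i \<and> xs i < zs (Suc i)" if "i < M" for i
    using zs[of i] zs[of "Suc i"] that by (simp add: t_def)
  have zs_mono: "strict_mono_on {..<Suc M} zs"
    using interlacing by (intro strict_mono_on_lessThan_SucI) (force intro: less_trans)
  have "p = smult (lead_coeff p) (\<Prod>i<Suc M. [:- zs i, 1:])"
    using deg zs strict_mono_on_imp_inj_on[OF zs_mono]
    by (intro poly_eq_smult_prod_roots) auto
  with that interlacing zs_mono show ?thesis
    by blast
qed

section \<open>Monic Hermite polynomials\<close>

lemma degree_monic_hermite [simp]: "degree (monic_hermite n) = n"
  and coeff_monic_hermite_self [simp]: "coeff (monic_hermite n) n = 1"
proof (induction n rule: monic_hermite.induct)
  case (3 n)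
  have "monic_hermite (Suc (Suc n))
      = - smult ((real n + 1) / 2) (monic_hermite n) + [:0, 1:] * monic_hermite (Suc n)"
    by simp
  moreover have "degree (- smult ((real n + 1) / 2) (monic_hermite n))
      < degree ([:0, 1:] * monic_hermite (Suc n))"
    using "3.IH" by (auto simp: degree_mult_eq)
  ultimately show "degree (monic_hermite (Suc (Suc n))) = Suc (Suc n)"
    and "coeff (monic_hermite (Suc (Suc n))) (Suc (Suc n)) = 1"
    using "3.IH" by (simp_all only: degree_add_eq_right lead_coeff_add_le)
      (auto simp: degree_mult_eq lead_coeff_mult coeff_eq_0)
qed simp_all

lemma poly_monic_hermite_Suc_Suc:
  "poly (monic_hermite (Suc (Suc n))) x
    = x * poly (monic_hermite (Suc n)) x - (real n + 1) / 2 * poly (monic_hermite n) x"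
  by simp

declare monic_hermite.simps(3) [simp del]

lemma poly_monic_hermite_minus: "poly (monic_hermite n) (- x) = (-1) ^ n * poly (monic_hermite n) x"
  by (induction n rule: monic_hermite.induct) (auto simp: poly_monic_hermite_Suc_Suc algebra_simps)

lemma poly_monic_hermite_pos:
  assumes "x > 0" "x\<^sup>2 \<ge> 2 * (real n - 1)"
  shows "poly (monic_hermite n) x > 0"
proof -
  have growth: "poly (monic_hermite k) x > 0 \<and> x / 2 * poly (monic_hermite k) x \<le> poly (monic_hermite (Suc k)) x"
    if "Suc k \<le> n" for k
    using that
  proof (induction k)
    case (Suc k)
    let ?a = "poly (monic_hermite k) x" and ?b = "poly (monic_hermite (Suc k)) x"
    have a: "?a > 0" and ab: "x / 2 * ?a \<le> ?b"
      using Suc by auto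
    have "(real k + 1) * ?a \<le> x\<^sup>2 / 2 * ?a"
      using Suc.prems assms(2) a by (intro mult_right_mono) auto
    also have "\<dots> \<le> x * ?b"
      using mult_left_mono[OF ab] assms(1) by (simp add: power2_eq_square mult_ac)
    finally have "x / 2 * ?b \<le> poly (monic_hermite (Suc (Suc k))) x"
      by (simp add: poly_monic_hermite_Suc_Suc field_simps)
    moreover have "?b > 0"
      using order.strict_trans2[OF mult_pos_pos[OF half_gt_zero[OF assms(1)] a] ab] .
    ultimately show ?case
      by simp
  qed (use assms in simp)
  show ?thesis
  proof (cases n)
    case (Suc m)
    with growth[of m] assms(1) have "0 < x / 2 * poly (monic_hermite m) x"
      and "x / 2 * poly (monic_hermite m) x \<le> poly (monic_hermite n) x"
      by auto
    then show ?thesis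
      by linarith
  qed simp
qed

lemma monic_hermite_root_bound:
  assumes "poly (monic_hermite n) y = 0"
  shows "y\<^sup>2 \<le> 2 * (real n - 1)"
proof (rule ccontr)
  assume "\<not> ?thesis"
  moreover have "n \<noteq> 0"
    using assms by (cases n) auto
  ultimately have "poly (monic_hermite n) \<bar>y\<bar> > 0"
    by (intro poly_monic_hermite_pos) auto
  moreover have "poly (monic_hermite n) \<bar>y\<bar> = 0"
    using assms poly_monic_hermite_minus[of n y] by (cases "y \<ge> 0") auto
  ultimately show False
    by simp
qed

lemma monic_hermite_real_roots:
  obtains xs where "strict_mono_on {..<Suc m} xs"
    and "monic_hermite (Suc m) = (\<Prod>i<Suc m. [:- xs i, 1:])"
    and "\<And>i. i \<le> m \<Longrightarrow> (-1) ^ (m - i) * poly (monic_hermite m) (xs i) > 0"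
proof -
  have "\<exists>xs. strict_mono_on {..<Suc m} xs \<and> monic_hermite (Suc m) = (\<Prod>i<Suc m. [:- xs i, 1:])
      \<and> (\<forall>i\<le>m. (-1) ^ (m - i) * poly (monic_hermite m) (xs i) > 0)"
  proof (induction m)
    case 0
    show ?case
      by (rule exI[of _ "\<lambda>_. 0"]) (auto simp: strict_mono_on_def)
  next
    case (Suc m)
    then obtain xs where mono: "strict_mono_on {..<Suc m} xs"
      and xs_roots: "monic_hermite (Suc m) = (\<Prod>i<Suc m. [:- xs i, 1:])"
      and xs_signs: "\<And>i. i \<le> m \<Longrightarrow> (-1) ^ (m - i) * poly (monic_hermite m) (xs i) > 0"
      by blast
    have signs: "(-1) ^ (Suc m - i) * poly (monic_hermite (Suc (Suc m))) (xs i) > 0"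
      if "i < Suc m" for i
    proof -
      have "poly (monic_hermite (Suc m)) (xs i) = 0"
        unfolding xs_roots using that by (rule poly_prod_roots_at_root)
      then have "(-1) ^ (Suc m - i) * poly (monic_hermite (Suc (Suc m))) (xs i)
          = (real m + 1) / 2 * ((-1) ^ (m - i) * poly (monic_hermite m) (xs i))"
        using that by (simp add: poly_monic_hermite_Suc_Suc Suc_diff_le)
      moreover have "(real m + 1) / 2 > 0"
        by simp
      ultimately show ?thesis
        using xs_signs[of i] that by (metis mult_pos_pos less_Suc_eq_le)
    qed
    have lead: "lead_coeff (monic_hermite (Suc (Suc m))) > 0"
      by simp
    obtain zs where interlacing: "\<And>i. i < Suc m \<Longrightarrow> zs i < xs i \<and> xs i < zs (Suc i)"
      and zs_mono: "strict_mono_on {..<Suc (Suc m)} zs"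
      and "monic_hermite (Suc (Suc m))
        = smult (lead_coeff (monic_hermite (Suc (Suc m)))) (\<Prod>i<Suc (Suc m). [:- zs i, 1:])"
      using alternating_signs_imp_interlacing_roots[OF degree_monic_hermite lead mono signs] by blast
    then have zs_roots: "monic_hermite (Suc (Suc m)) = (\<Prod>i<Suc (Suc m). [:- zs i, 1:])"
      by (simp only: degree_monic_hermite coeff_monic_hermite_self smult_1_left)
    have "(-1) ^ (Suc m - i) * poly (monic_hermite (Suc m)) (zs i) > 0" if "i \<le> Suc m" for i
      using interlacing_sign_prod[OF zs_mono interlacing that] by (simp add: xs_roots poly_prod del: prod.lessThan_Suc)
    with zs_mono zs_roots show ?case
      by auto
  qed
  with that show ?thesis
    by blast
qed

lemma monic_hermite_downward_step:
  fixes y C :: real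
  assumes "0 < n" and y: "\<bar>y\<bar> \<le> 3 / 2 * sqrt (real n)" and k: "real n \<le> 2 * (real k + 1)"
    and bounds: "\<bar>poly (monic_hermite (Suc k)) y\<bar> \<le> C"
      "8 / sqrt (real n) * \<bar>poly (monic_hermite (Suc (Suc k))) y\<bar> \<le> C"
  shows "\<bar>poly (monic_hermite k) y\<bar> \<le> 8 / sqrt (real n) * C"
proof -
  define s where "s = sqrt (real n)"
  have s: "s > 0" "s * s = real n"
    using \<open>0 < n\<close> by (simp_all add: s_def)
  have "s * s / 4 * \<bar>poly (monic_hermite k) y\<bar> \<le> (real k + 1) / 2 * \<bar>poly (monic_hermite k) y\<bar>"
    using k s(2) by (intro mult_right_mono) auto
  also have "\<dots> = \<bar>y * poly (monic_hermite (Suc k)) y - poly (monic_hermite (Suc (Suc k))) y\<bar>"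
    by (simp add: poly_monic_hermite_Suc_Suc abs_mult)
  also have "\<dots> \<le> \<bar>y\<bar> * \<bar>poly (monic_hermite (Suc k)) y\<bar>
      + \<bar>poly (monic_hermite (Suc (Suc k))) y\<bar>"
    by (metis abs_mult abs_triangle_ineq4)
  also have "\<dots> \<le> 3 / 2 * s * C + s / 8 * C"
    using y bounds s(1) by (intro add_mono mult_mono) (auto simp: s_def field_simps)
  finally have "s / 4 * (s * \<bar>poly (monic_hermite k) y\<bar>) \<le> s / 4 * (13 / 2 * C)"
    by (simp add: algebra_simps)
  then have "s * \<bar>poly (monic_hermite k) y\<bar> \<le> 13 / 2 * C"
    using s(1) by (simp add: mult_le_cancel_left_pos)
  moreover have "C \<ge> 0"
    using bounds(1) by linarith
  ultimately have "s * \<bar>poly (monic_hermite k) y\<bar> \<le> 8 * C"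
    by linarith
  then show ?thesis
    using s(1) by (simp add: s_def field_simps)
qed

lemma monic_hermite_backward_bound:
  assumes root: "poly (monic_hermite (n - 1)) y = 0" and j: "2 \<le> j" "2 * j \<le> n"
  shows "\<bar>poly (monic_hermite (n - j)) y\<bar>
    \<le> (8 / sqrt (real n)) ^ (j - 2) * \<bar>poly (monic_hermite (n - 2)) y\<bar>"
proof -
  define c where "c = 8 / sqrt (real n)"
  define h where "h k = poly (monic_hermite (n - 1 - k)) y" for k
  have "y\<^sup>2 \<le> (3 / 2 * sqrt (real n))\<^sup>2"
    using monic_hermite_root_bound[OF root] j by (simp add: power2_eq_square)
  then have y: "\<bar>y\<bar> \<le> 3 / 2 * sqrt (real n)"
    using abs_le_square_iff[of y "3 / 2 * sqrt (real n)"] by simp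
  \<comment> \<open>two consecutive terms are needed because the recurrence has order two\<close>
  have "\<bar>h (Suc d)\<bar> \<le> c ^ d * \<bar>h 1\<bar> \<and> c * \<bar>h d\<bar> \<le> c ^ d * \<bar>h 1\<bar>"
    if "2 * (d + 1) \<le> n" for d
    using that
  proof (induction d)
    case 0
    then show ?case
      using root by (simp add: h_def)
  next
    case (Suc d)
    define k where "k = n - 3 - d"
    have "h (Suc (Suc d)) = poly (monic_hermite k) y" "h (Suc d) = poly (monic_hermite (Suc k)) y"
      "h d = poly (monic_hermite (Suc (Suc k))) y" "real n \<le> 2 * (real k + 1)"
      using Suc.prems by (auto simp: h_def k_def Suc_diff_Suc numeral_3_eq_3)
    then have "\<bar>h (Suc (Suc d))\<bar> \<le> c * (c ^ d * \<bar>h 1\<bar>)"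
      using monic_hermite_downward_step[OF _ y] Suc by (simp add: c_def)
    moreover have "c * \<bar>h (Suc d)\<bar> \<le> c * (c ^ d * \<bar>h 1\<bar>)"
      using Suc by (intro mult_left_mono) (auto simp: c_def)
    ultimately show ?case
      by simp
  qed
  from this[of "j - 2"] have "\<bar>h (Suc (j - 2))\<bar> \<le> c ^ (j - 2) * \<bar>h 1\<bar>"
    using j by simp
  moreover have "n - 1 - Suc (j - 2) = n - j"
    using j by simp
  ultimately show ?thesis
    by (simp add: h_def c_def numeral_2_eq_2)
qed

section \<open>The tail of q at the zeros of H_(n-1)\<close>

lemma backward_ratio_bound:
  fixes \<rho> :: "nat \<Rightarrow> real"
  assumes rho_pos: "\<And>m. \<rho> m > 0" and "0 \<le> \<nu>"
    and rho_ratio: "\<And>m. m \<ge> 1 \<Longrightarrow> 2 * \<rho> (m - 1) / \<rho> m \<le> real m powr \<nu>"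
    and "j \<le> n"
  shows "\<rho> (n - j) \<le> \<rho> n * (real n powr \<nu> / 2) ^ j"
  using assms(4)
proof (induction j)
  case (Suc j)
  have "n - Suc j = n - j - 1" "1 \<le> n - j"
    using Suc.prems by auto
  then have "\<rho> (n - Suc j) \<le> \<rho> (n - j) * (real (n - j) powr \<nu> / 2)"
    using rho_ratio[of "n - j"] rho_pos[of "n - j"] by (simp add: pos_divide_le_eq mult_ac)
  also have "\<dots> \<le> \<rho> (n - j) * (real n powr \<nu> / 2)"
    using rho_pos[of "n - j"] \<open>0 \<le> \<nu>\<close> by (intro mult_left_mono divide_right_mono powr_mono2) auto
  also have "\<dots> \<le> \<rho> n * (real n powr \<nu> / 2) ^ j * (real n powr \<nu> / 2)"
    using Suc by (intro mult_right_mono) auto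
  finally show ?case
    by (simp add: mult_ac)
qed simp

lemma two_powr_le_sqrt:
  fixes x :: real
  assumes "0 \<le> \<nu>" "\<nu> \<le> 1/2" "4 \<le> x"
  shows "2 * x powr \<nu> \<le> 6 powr \<nu> * sqrt x"
proof -
  have "(x / 6) powr \<nu> \<le> sqrt x / 2"
  proof (cases "x \<le> 6")
    case True
    have "(x / 6) powr \<nu> \<le> 1"
      using True assms by (intro powr_le1) auto
    moreover have "2 \<le> sqrt x"
      using real_sqrt_le_mono[OF assms(3)] by simp
    ultimately show ?thesis
      by simp
  next
    case False
    then have "(x / 6) powr \<nu> \<le> (x / 6) powr (1/2)"
      using assms by (intro powr_mono) auto
    also have "\<dots> = sqrt x / sqrt 6"
      using assms by (simp add: powr_half_sqrt real_sqrt_divide)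
    also have "\<dots> \<le> sqrt x / 2"
      using assms by (intro divide_left_mono) (auto simp: real_le_rsqrt)
    finally show ?thesis .
  qed
  then have "2 * ((x / 6) powr \<nu> * 6 powr \<nu>) \<le> 6 powr \<nu> * sqrt x"
    by (simp add: field_simps)
  then show ?thesis
    using assms by (simp add: powr_divide)
qed

lemma powr_square_le_sqrt:
  fixes x :: real
  assumes "0 \<le> \<nu>" "\<nu> \<le> 1/4" "1 \<le> x"
  shows "(x powr \<nu>)\<^sup>2 \<le> sqrt x"
proof -
  have "(x powr \<nu>)\<^sup>2 = x powr (2 * \<nu>)"
    by (simp add: power2_eq_square flip: powr_add)
  also have "\<dots> \<le> x powr (1/2)"
    using assms by (intro powr_mono) auto
  finally show ?thesis
    using assms by (simp add: powr_half_sqrt)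
qed

lemma geom_quot_eq_sum:
  assumes "0 \<le> \<nu>" "1 \<le> K"
  shows "geom_quot \<nu> K = (\<Sum>i<K - 1. (6 powr \<nu>) ^ i)"
proof (cases "\<nu> = 0")
  case False
  have "6 powr (\<nu> * (real K - 1)) = (6 powr \<nu>) ^ (K - 1)"
    using assms by (simp add: powr_powr of_nat_diff flip: powr_realpow)
  moreover have "6 powr \<nu> \<noteq> 1"
    using False assms(1) by simp
  ultimately show ?thesis
    using False by (simp add: geom_quot_def sum_gp_strict) (metis minus_diff_eq minus_divide_divide)
qed (use assms in \<open>simp add: geom_quot_def of_nat_diff\<close>)

lemma hermite_tail_term_bound:
  fixes \<rho> :: "nat \<Rightarrow> real"
  assumes rho_pos: "\<And>m. \<rho> m > 0" and nu: "0 \<le> \<nu>" "\<nu> \<le> 1/2"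
    and rho_ratio: "\<And>m. m \<ge> 1 \<Longrightarrow> 2 * \<rho> (m - 1) / \<rho> m \<le> real m powr \<nu>"
    and root: "poly (monic_hermite (n - 1)) y = 0" and j: "2 \<le> j" "2 * j \<le> n"
  shows "\<rho> (n - j) * \<bar>poly (monic_hermite (n - j)) y\<bar>
    \<le> \<rho> n * (real n powr \<nu>)\<^sup>2 / 4 * (2 * 6 powr \<nu>) ^ (j - 2)
      * \<bar>poly (monic_hermite (n - 2)) y\<bar>"
proof -
  define w where "w = real n powr \<nu>"
  define c where "c = 8 / sqrt (real n)"
  define A where "A = \<bar>poly (monic_hermite (n - 2)) y\<bar>"
  have "2 * w \<le> 6 powr \<nu> * sqrt (real n)"
    unfolding w_def using j nu by (intro two_powr_le_sqrt) auto
  then have wc: "w * c / 2 \<le> 2 * 6 powr \<nu>"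
    using j by (simp add: c_def field_simps)
  have "\<rho> (n - j) * \<bar>poly (monic_hermite (n - j)) y\<bar> \<le> \<rho> n * (w / 2) ^ j * (c ^ (j - 2) * A)"
    using backward_ratio_bound[OF rho_pos nu(1) rho_ratio, of j n]
      monic_hermite_backward_bound[OF root j] rho_pos[of "n - j"] j
    unfolding w_def c_def A_def by (intro mult_mono) auto
  also have "\<dots> = \<rho> n * w\<^sup>2 / 4 * (w * c / 2) ^ (j - 2) * A"
  proof -
    have "(w / 2) ^ j = (w / 2)\<^sup>2 * (w / 2) ^ (j - 2)"
      using j by (metis le_add_diff_inverse power_add)
    then show ?thesis
      by (simp add: power_mult_distrib power2_eq_square field_simps)
  qed
  also have "\<dots> \<le> \<rho> n * w\<^sup>2 / 4 * (2 * 6 powr \<nu>) ^ (j - 2) * A"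
    using wc rho_pos[of n] j
    by (intro mult_right_mono mult_left_mono power_mono) (auto simp: w_def c_def A_def)
  finally show ?thesis
    by (simp add: w_def A_def)
qed

lemma sum_doubled_geometric_le:
  fixes e :: real
  assumes "0 \<le> e"
  shows "(\<Sum>i<N. (2 * e) ^ i) \<le> 2 ^ (N - 1) * (\<Sum>i<N. e ^ i)"
  unfolding sum_distrib_left
proof (rule sum_mono)
  fix i assume "i \<in> {..<N}"
  then have "(2::real) ^ i \<le> 2 ^ (N - 1)"
    by (intro power_increasing) auto
  then show "(2 * e) ^ i \<le> 2 ^ (N - 1) * e ^ i"
    using assms by (simp add: power_mult_distrib mult_right_mono)
qed

lemma geometric_tail_le_geom_quot:
  assumes "0 \<le> \<nu>" "2 \<le> K"
  shows "(\<Sum>j=2..K. (2 * 6 powr \<nu>) ^ (j - 2)) \<le> 2 ^ (K - 2) * geom_quot \<nu> K"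
proof -
  have "(\<Sum>j=2..K. (2 * 6 powr \<nu>) ^ (j - 2)) = (\<Sum>i<K - 1. (2 * 6 powr \<nu>) ^ i)"
    using assms(2) by (intro sum.reindex_bij_witness[of _ "\<lambda>i. i + 2" "\<lambda>j. j - 2"]) auto
  also have "\<dots> \<le> 2 ^ (K - 2) * geom_quot \<nu> K"
    using sum_doubled_geometric_le[of "6 powr \<nu>" "K - 1"] assms
    by (simp add: geom_quot_eq_sum numeral_2_eq_2)
  finally show ?thesis .
qed

lemma threshold_le_sqrt:
  assumes "real n \<ge> 6 powr (2 * \<nu>) * G\<^sup>2 * 4 powr (real K - 2) * M\<^sup>2" "2 \<le> K"
  shows "6 powr \<nu> * G * 2 ^ (K - 2) * M \<le> sqrt (real n)"
proof (rule real_le_rsqrt)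
  have "4 powr (real K - 2) = 4 ^ (K - 2)"
    using assms(2) by (simp add: of_nat_diff flip: powr_realpow)
  also have "\<dots> = (2 ^ (K - 2))\<^sup>2"
    by (simp add: power2_eq_square flip: power_mult_distrib)
  finally have "4 powr (real K - 2) = (2 ^ (K - 2))\<^sup>2" .
  moreover have "6 powr (2 * \<nu>) = (6 powr \<nu>)\<^sup>2"
    by (simp add: power2_eq_square flip: powr_add)
  ultimately show "(6 powr \<nu> * G * 2 ^ (K - 2) * M)\<^sup>2 \<le> real n"
    using assms(1) by (simp add: power_mult_distrib)
qed

lemma hermite_tail_sum_bound:
  fixes \<rho> \<gamma> :: "nat \<Rightarrow> real"
  assumes rho_pos: "\<And>m. \<rho> m > 0" and nu: "0 \<le> \<nu>" "\<nu> \<le> 1/4"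
    and rho_ratio: "\<And>m. m \<ge> 1 \<Longrightarrow> 2 * \<rho> (m - 1) / \<rho> m \<le> real m powr \<nu>"
    and n_bound: "real n \<ge> 6 powr (2 * \<nu>) * (geom_quot \<nu> K)\<^sup>2 * 4 powr (real K - 2)
                     * (Max {\<bar>\<gamma> j\<bar> | j. 2 \<le> j \<and> j \<le> K})\<^sup>2"
    and nK: "2 * K \<le> n" and root: "poly (monic_hermite (n - 1)) y = 0"
  shows "\<bar>\<Sum>j=2..K. \<gamma> j * \<rho> (n - j) * poly (monic_hermite (n - j)) y\<bar>
    \<le> \<rho> n * (real n / 4) * \<bar>poly (monic_hermite (n - 2)) y\<bar>"
proof (cases "2 \<le> K")
  case True
  define M where "M = Max {\<bar>\<gamma> j\<bar> | j. 2 \<le> j \<and> j \<le> K}"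
  define G where "G = geom_quot \<nu> K"
  define A where "A = \<bar>poly (monic_hermite (n - 2)) y\<bar>"
  define B where "B = \<rho> n * (real n powr \<nu>)\<^sup>2 / 4 * A"
  have M: "\<bar>\<gamma> j\<bar> \<le> M" if "j \<in> {2..K}" for j
    unfolding M_def using that by (intro Max_ge) auto
  have nonneg: "0 \<le> M" "0 \<le> B" "0 \<le> G"
    using M[of 2] True rho_pos[of n] nu
    by (auto simp: B_def A_def G_def geom_quot_eq_sum sum_nonneg)
  have "6 powr \<nu> * (G * 2 ^ (K - 2) * M) \<le> sqrt (real n)"
    using threshold_le_sqrt[OF n_bound True] by (simp add: G_def M_def mult_ac)
  moreover have "1 \<le> 6 powr \<nu>"
    using nu by (simp add: ge_one_powr_ge_zero)
  ultimately have MG: "M * (2 ^ (K - 2) * G) \<le> sqrt (real n)"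
    using mult_right_mono[of 1 "6 powr \<nu>" "G * 2 ^ (K - 2) * M"] nonneg by (simp add: mult_ac)
  have B: "B \<le> \<rho> n * sqrt (real n) / 4 * A"
    unfolding B_def using powr_square_le_sqrt[OF nu, of "real n"] nK True rho_pos[of n]
    by (intro mult_right_mono divide_right_mono mult_left_mono) (auto simp: A_def)
  have "\<bar>\<Sum>j=2..K. \<gamma> j * \<rho> (n - j) * poly (monic_hermite (n - j)) y\<bar>
      \<le> (\<Sum>j=2..K. M * B * (2 * 6 powr \<nu>) ^ (j - 2))"
  proof (rule order_trans[OF sum_abs sum_mono])
    fix j assume j: "j \<in> {2..K}"
    have "\<rho> (n - j) * \<bar>poly (monic_hermite (n - j)) y\<bar> \<le> B * (2 * 6 powr \<nu>) ^ (j - 2)"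
      using hermite_tail_term_bound[OF rho_pos nu(1) _ rho_ratio root, of j] nu(2) j nK
      by (simp add: B_def A_def mult_ac)
    from mult_mono[OF M[OF j] this nonneg(1)] show
      "\<bar>\<gamma> j * \<rho> (n - j) * poly (monic_hermite (n - j)) y\<bar> \<le> M * B * (2 * 6 powr \<nu>) ^ (j - 2)"
      using rho_pos[of "n - j"] by (simp add: abs_mult mult_ac)
  qed
  also have "\<dots> \<le> (M * (2 ^ (K - 2) * G)) * B"
    using geometric_tail_le_geom_quot[OF nu(1) True] nonneg
    by (simp add: G_def mult_left_mono mult_ac flip: sum_distrib_left)
  also have "\<dots> \<le> sqrt (real n) * (\<rho> n * sqrt (real n) / 4 * A)"
    using MG B nonneg by (intro mult_mono) auto
  also have "\<dots> = \<rho> n * (real n / 4) * A"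
    by simp
  finally show ?thesis
    by (simp add: A_def)
qed (use rho_pos[of n] in simp)

section \<open>The sign of q at the zeros of H_(n-1)\<close>

lemma degree_q_poly:
  assumes "\<gamma> 0 = 1" "\<rho> n \<noteq> 0" "1 \<le> n"
  shows "degree (q_poly \<gamma> \<rho> K n) = n" and "lead_coeff (q_poly \<gamma> \<rho> K n) = \<rho> n"
proof -
  define r where "r = (\<Sum>j\<in>{1..K}. smult (\<gamma> j * \<rho> (n - j)) (monic_hermite (n - j)))"
  have "{..K} = insert 0 {1..K}"
    by auto
  then have q: "q_poly \<gamma> \<rho> K n = r + smult (\<rho> n) (monic_hermite n)"
    using assms(1) by (simp add: q_poly_def r_def)
  have "degree r \<le> n - 1"
    unfolding r_def by (intro degree_sum_le order.trans[OF degree_smult_le]) auto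
  then have "degree r < degree (smult (\<rho> n) (monic_hermite n))"
    using assms(2,3) by simp
  then show "degree (q_poly \<gamma> \<rho> K n) = n" and "lead_coeff (q_poly \<gamma> \<rho> K n) = \<rho> n"
    unfolding q using assms(2) by (simp_all only: degree_add_eq_right lead_coeff_add_le) (simp_all add: coeff_eq_0)
qed

lemma q_poly_sign_at_hermite_root:
  fixes \<rho> \<gamma> :: "nat \<Rightarrow> real"
  assumes rho_pos: "\<And>m. \<rho> m > 0" and nu: "0 \<le> \<nu>" "\<nu> \<le> 1/4"
    and rho_ratio: "\<And>m. m \<ge> 1 \<Longrightarrow> 2 * \<rho> (m - 1) / \<rho> m \<le> real m powr \<nu>"
    and g0: "\<gamma> 0 = 1"
    and n_bound: "real n \<ge> 6 powr (2 * \<nu>) * (geom_quot \<nu> K)\<^sup>2 * 4 powr (real K - 2)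
                     * (Max {\<bar>\<gamma> j\<bar> | j. 2 \<le> j \<and> j \<le> K})\<^sup>2"
    and K: "0 < K" "2 * K \<le> n"
    and root: "poly (monic_hermite (n - 1)) y = 0" and nonzero: "poly (monic_hermite (n - 2)) y \<noteq> 0"
  shows "poly (q_poly \<gamma> \<rho> K n) y * poly (monic_hermite (n - 2)) y < 0"
proof -
  define H where "H = poly (monic_hermite (n - 2)) y"
  define E where "E = (\<Sum>j=2..K. \<gamma> j * \<rho> (n - j) * poly (monic_hermite (n - j)) y)"
  define P where "P = \<rho> n * ((real n - 1) / 2)"
  have "2 \<le> n"
    using K by linarith
  then obtain m where n: "n = Suc (Suc m)"
    by (metis add_2_eq_Suc le_Suc_ex)
  have "poly (monic_hermite n) y = - ((real n - 1) / 2) * H"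
    using poly_monic_hermite_Suc_Suc[of m y] root by (simp add: n H_def)
  moreover have "{..K} = {0, 1} \<union> {2..K}"
    using K by auto
  ultimately have q: "poly (q_poly \<gamma> \<rho> K n) y = - P * H + E"
    using g0 root by (simp add: q_poly_def poly_sum E_def P_def sum.union_disjoint)
  have "\<bar>E\<bar> < P * \<bar>H\<bar>"
  proof (cases "K = 1")
    case True
    then show ?thesis
      using nonzero K rho_pos[of n] by (simp add: E_def P_def H_def)
  next
    case False
    then have "real n / 4 < (real n - 1) / 2"
      using K by simp
    then have "\<rho> n * (real n / 4) * \<bar>H\<bar> < P * \<bar>H\<bar>"
      using nonzero rho_pos[of n] by (simp add: P_def H_def)
    then show ?thesis
      using hermite_tail_sum_bound[OF rho_pos nu rho_ratio n_bound K(2) root]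
      by (simp add: E_def H_def)
  qed
  have "E * H \<le> \<bar>E\<bar> * \<bar>H\<bar>"
    by (metis abs_ge_self abs_mult)
  also have "\<dots> < P * \<bar>H\<bar> * \<bar>H\<bar>"
    using \<open>\<bar>E\<bar> < P * \<bar>H\<bar>\<close> nonzero by (intro mult_strict_right_mono) (auto simp: H_def)
  also have "\<dots> = P * H * H"
    by (simp add: mult.assoc)
  finally show ?thesis
    by (simp add: q H_def algebra_simps)
qed

lemma q_poly_interlacing_roots:
  fixes \<rho> \<gamma> :: "nat \<Rightarrow> real"
  assumes rho_pos: "\<And>m. \<rho> m > 0" and nu: "0 \<le> \<nu>" "\<nu> \<le> 1/4"
    and rho_ratio: "\<And>m. m \<ge> 1 \<Longrightarrow> 2 * \<rho> (m - 1) / \<rho> m \<le> real m powr \<nu>"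
    and g0: "\<gamma> 0 = 1"
    and n_bound: "real n \<ge> 6 powr (2 * \<nu>) * (geom_quot \<nu> K)\<^sup>2 * 4 powr (real K - 2)
                     * (Max {\<bar>\<gamma> j\<bar> | j. 2 \<le> j \<and> j \<le> K})\<^sup>2"
    and K: "0 < K" "2 * K \<le> n"
  obtains xs zs where "monic_hermite (n - 1) = (\<Prod>i<n - 1. [:- xs i, 1:])"
    and "q_poly \<gamma> \<rho> K n = smult (\<rho> n) (\<Prod>i<n. [:- zs i, 1:])"
    and "strict_mono_on {..<n} zs" and "\<And>i. i < n - 1 \<Longrightarrow> zs i < xs i \<and> xs i < zs (Suc i)"
proof -
  define q where "q = q_poly \<gamma> \<rho> K n"
  have "2 \<le> n"
    using K by linarith
  then obtain m where n: "n = Suc (Suc m)"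
    by (metis add_2_eq_Suc le_Suc_ex)
  obtain xs where xs_mono: "strict_mono_on {..<Suc m} xs"
    and xs_roots: "monic_hermite (Suc m) = (\<Prod>i<Suc m. [:- xs i, 1:])"
    and xs_signs: "\<And>i. i \<le> m \<Longrightarrow> (-1) ^ (m - i) * poly (monic_hermite m) (xs i) > 0"
    using monic_hermite_real_roots[of m] by blast
  have q_signs: "(-1) ^ (Suc m - i) * poly q (xs i) > 0" if "i < Suc m" for i
  proof -
    have "poly (monic_hermite (n - 1)) (xs i) = 0"
      unfolding n diff_Suc_1 xs_roots using that by (rule poly_prod_roots_at_root)
    moreover have "(-1) ^ (m - i) * poly (monic_hermite m) (xs i) > 0"
      using xs_signs that by simp
    ultimately have "poly q (xs i) * poly (monic_hermite m) (xs i) < 0"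
      using q_poly_sign_at_hermite_root[OF rho_pos nu rho_ratio g0 n_bound K]
      by (force simp: q_def n)
    from neg_one_power_Suc_pos_of_mult_neg[OF this \<open>(-1) ^ (m - i) * _ > 0\<close>] show ?thesis
      using that by (simp only: Suc_diff_le less_Suc_eq_le)
  qed
  have degree_q: "degree q = Suc (Suc m)" and lead_q: "lead_coeff q = \<rho> n"
    using degree_q_poly[of \<gamma> \<rho> n K] g0 rho_pos[of n] by (auto simp: q_def n)
  then have "lead_coeff q > 0"
    using rho_pos by simp
  obtain zs where interlacing: "\<And>i. i < Suc m \<Longrightarrow> zs i < xs i \<and> xs i < zs (Suc i)"
    and zs_mono: "strict_mono_on {..<Suc (Suc m)} zs"
    and q_roots: "q = smult (lead_coeff q) (\<Prod>i<Suc (Suc m). [:- zs i, 1:])"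
    using alternating_signs_imp_interlacing_roots[OF degree_q \<open>lead_coeff q > 0\<close> xs_mono q_signs]
    by blast
  show ?thesis
  proof (rule that)
    show "monic_hermite (n - 1) = (\<Prod>i<n - 1. [:- xs i, 1:])"
      unfolding n diff_Suc_1 by (rule xs_roots)
    show "q_poly \<gamma> \<rho> K n = smult (\<rho> n) (\<Prod>i<n. [:- zs i, 1:])"
      using q_roots unfolding lead_q unfolding q_def n .
    show "strict_mono_on {..<n} zs"
      unfolding n by (rule zs_mono)
    show "zs i < xs i \<and> xs i < zs (Suc i)" if "i < n - 1" for i
      using that interlacing by (simp add: n)
  qed
qed

theorem mainTheorem6:
  fixes \<rho> :: "nat \<Rightarrow> real" and \<gamma> :: "nat \<Rightarrow> real" and \<nu> :: real and K n :: nat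
  assumes rho_pos: "\<And>m. \<rho> m > 0"
    and nu: "0 \<le> \<nu>" "\<nu> \<le> 1/4"
    and rho_ratio: "\<And>m. m \<ge> 1 \<Longrightarrow> 2 * \<rho> (m - 1) / \<rho> m \<le> real m powr \<nu>"
    and K: "K > 0"
    and g0: "\<gamma> 0 = 1" and gK: "\<gamma> K \<noteq> 0"
    and n_bound1: "real n \<ge> 6 powr (2 * \<nu>) * (geom_quot \<nu> K)\<^sup>2 * 4 powr (real K - 2)
                     * (Max {\<bar>\<gamma> j\<bar> | j. 2 \<le> j \<and> j \<le> K})\<^sup>2"
    and n_bound2: "n \<ge> 2 * K"
  shows "(\<forall>z::complex. poly (map_poly complex_of_real (q_poly \<gamma> \<rho> K n)) z = 0 \<longrightarrow> z \<in> \<real>)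
       \<and> (\<forall>z::complex. poly (map_poly complex_of_real (q_poly \<gamma> \<rho> K n)) z = 0 \<longrightarrow>
              poly (pderiv (map_poly complex_of_real (q_poly \<gamma> \<rho> K n))) z \<noteq> 0)
       \<and> interlaces {x. poly (q_poly \<gamma> \<rho> K n) x = 0} {x. poly (hermite (n - 1)) x = 0}"
proof -
  obtain xs zs where xs_roots: "monic_hermite (n - 1) = (\<Prod>i<n - 1. [:- xs i, 1:])"
    and q_roots: "q_poly \<gamma> \<rho> K n = smult (\<rho> n) (\<Prod>i<n. [:- zs i, 1:])"
    and zs_mono: "strict_mono_on {..<n} zs"
    and interlacing: "\<And>i. i < n - 1 \<Longrightarrow> zs i < xs i \<and> xs i < zs (Suc i)"
    using q_poly_interlacing_roots[OF rho_pos nu rho_ratio g0 n_bound1 K n_bound2] by blast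
  have n: "Suc (n - 1) = n" "0 < n - 1"
    using K n_bound2 by auto
  have degree: "degree (q_poly \<gamma> \<rho> K n) = n" and nonzero: "q_poly \<gamma> \<rho> K n \<noteq> 0"
    using degree_q_poly[of \<gamma> \<rho> n K] g0 rho_pos[of n] n by auto
  have q_zeros: "{x. poly (q_poly \<gamma> \<rho> K n) x = 0} = zs ` {..<n}"
    using poly_smult_prod_roots_eq_0_iff[of "\<rho> n" zs n] rho_pos[of n] by (simp add: q_roots set_eq_iff)
  have hermite_zeros: "{x. poly (hermite (n - 1)) x = 0} = xs ` {..<n - 1}"
    unfolding hermite_def xs_roots using poly_smult_prod_roots_eq_0_iff[of "2 ^ (n - 1)" xs "n - 1"]
    by (simp add: set_eq_iff)
  have "interlaces {x. poly (q_poly \<gamma> \<rho> K n) x = 0} {x. poly (hermite (n - 1)) x = 0}"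
    using interlaces_image[where M = "n - 1"] zs_mono interlacing n q_zeros hermite_zeros by auto
  moreover have "poly (q_poly \<gamma> \<rho> K n) (zs i) = 0" if "i < n" for i
    using q_zeros that by blast
  ultimately show ?thesis
    using of_real_poly_roots_real_and_simple[OF nonzero degree strict_mono_on_imp_inj_on[OF zs_mono]]
    by blast
qed

end
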